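(* Let $\mu$ be a measure on $[0,1]$, let $\Phi=\{\phi_j\}_{j=1}^\infty$ be an orthonormal basis of $L^2([0,1],\mu)$, and let $A>0$, $k>1/2$, $C>0$ be constants. Then, as $\epsilon\to0$, $$M_2(\epsilon,\Theta_k(\Phi,A,C))\asymp \epsilon^{-2/(2k-1)}.$$
   Context: Every $f\in L^2([0,1],\mu)$ has a unique expansion $f=\sum_{j\ge1}\theta_j\phi_j$ with $\sum_j\theta_j^2<\infty$. The approximate sparsity class $\Theta_k(\Phi,A,C)$ is the set of $f=\sum_j\theta_j\phi_j\in L^2([0,1],\mu)$ such that (a) the non-increasing rearrangement $\{\theta_{(j)}\}_{j\ge1}$ of the coefficients by absolute value ($\theta_{(j)}$ is the $j$-th largest in absolute value) satisfies $|\theta_{(j)}|\le Aj^{-k}$ for all $j\ge1$, and (b) for all $J\ge1$, $\sum_{j=J+1}^\infty\theta_j^2\le CJ^{-2k+1}$. For $\mathcal{F}\subseteq L^2([0,1],\mu)$, $M_2(\epsilon,\mathcal{F}):=\log N(\epsilon,\mathcal{F})$, where $N(\epsilon,\mathcal{F})$ is the cardinality of the largest $\epsilon$-packing set of $\mathcal{F}$ in the $L^2([0,1],\mu)$ distance. $a(\epsilon)\asymp b(\epsilon)$ means there are constants $0<c_1\le c_2<\infty$ with $c_1b(\epsilon)\le a(\epsilon)\le c_2 b(\epsilon)$ for all sufficiently small $\epsilon$. *)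

theory Defs
  imports "HOL-Analysis.Analysis" "HOL-Library.Extended_Nat"
begin

definition measure_on_unit_interval :: "real measure \<Rightarrow> bool" where
  "measure_on_unit_interval M \<longleftrightarrow>
     space M = {0..1} \<and> sets M = sets (restrict_space borel {0..1})"

text \<open>Square-integrable (real-valued) functions, i.e. representatives of L^2(M).\<close>
definition L2 :: "real measure \<Rightarrow> (real \<Rightarrow> real) set" where
  "L2 M = {f. f \<in> borel_measurable M \<and> integrable M (\<lambda>x. (f x)\<^sup>2)}"

definition L2_inner :: "real measure \<Rightarrow> (real \<Rightarrow> real) \<Rightarrow> (real \<Rightarrow> real) \<Rightarrow> real" where
  "L2_inner M f g = (\<integral>x. f x * g x \<partial>M)"

definition L2_dist :: "real measure \<Rightarrow> (real \<Rightarrow> real) \<Rightarrow> (real \<Rightarrow> real) \<Rightarrow> real" where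
  "L2_dist M f g = sqrt (\<integral>x. (f x - g x)\<^sup>2 \<partial>M)"

definition orthonormal_basis_L2 :: "real measure \<Rightarrow> (nat \<Rightarrow> real \<Rightarrow> real) \<Rightarrow> bool" where
  "orthonormal_basis_L2 M \<phi> \<longleftrightarrow>
     (\<forall>j\<ge>1. \<phi> j \<in> L2 M) \<and>
     (\<forall>i\<ge>1. \<forall>j\<ge>1. L2_inner M (\<phi> i) (\<phi> j) = (if i = j then 1 else 0)) \<and>
     (\<forall>f \<in> L2 M. (\<lambda>n. (\<integral>x. (f x - (\<Sum>j=1..n. L2_inner M f (\<phi> j) * \<phi> j x))\<^sup>2 \<partial>M))
                     \<longlonglongrightarrow> 0)"

text \<open>Non-increasing rearrangement of the absolute values of \<open>\<theta>_1, \<theta>_2, \<dots>\<close>: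
  \<open>\<theta>_(j)\<close> (for j \<ge> 1) is the j-th largest \<open>|\<theta>_i|\<close> (i \<ge> 1), counted with multiplicity,
  i.e. the least t \<ge> 0 such that fewer than j indices have \<open>|\<theta>_i| > t\<close>.\<close>
definition rearr :: "(nat \<Rightarrow> real) \<Rightarrow> nat \<Rightarrow> real" where
  "rearr \<theta> j = Inf {t. 0 \<le> t \<and> finite {i. i \<ge> 1 \<and> \<bar>\<theta> i\<bar> > t} \<and>
                        card {i. i \<ge> 1 \<and> \<bar>\<theta> i\<bar> > t} < j}"

definition Theta :: "real measure \<Rightarrow> (nat \<Rightarrow> real \<Rightarrow> real) \<Rightarrow> real \<Rightarrow> real \<Rightarrow> real
                      \<Rightarrow> (real \<Rightarrow> real) set" where
  "Theta M \<phi> k A C =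
     {f \<in> L2 M.
        let \<theta> = (\<lambda>j. L2_inner M f (\<phi> j)) in
        (\<forall>j\<ge>1. \<bar>rearr \<theta> j\<bar> \<le> A * real j powr (-k)) \<and>
        (\<forall>J\<ge>1. (\<Sum>i. (\<theta> (i + J + 1))\<^sup>2) \<le> C * real J powr (-2*k + 1))}"

definition packing_number :: "real measure \<Rightarrow> real \<Rightarrow> (real \<Rightarrow> real) set \<Rightarrow> enat" where
  "packing_number M \<epsilon> F =
     Sup {enat (card S) | S. finite S \<and> S \<subseteq> F \<and>
            (\<forall>f\<in>S. \<forall>g\<in>S. f \<noteq> g \<longrightarrow> L2_dist M f g > \<epsilon>)}"

text \<open>Metric entropy \<open>M_2(\<epsilon>,F) = log N(\<epsilon>,F)\<close> (natural log; only meaningful when N is finite).\<close>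
definition metric_entropy :: "real measure \<Rightarrow> real \<Rightarrow> (real \<Rightarrow> real) set \<Rightarrow> real" where
  "metric_entropy M \<epsilon> F = ln (real (the_enat (packing_number M \<epsilon> F)))"

end

theory Submission
  imports Defs
begin

text \<open>
  Upper bound: put \<open>J \<approx> \<epsilon>^(-2/(2k-1))\<close>. Rounding the first \<open>J\<close> coefficients to a grid of mesh
  \<open>2 \<surd>C J^(-k)\<close> is injective on every \<open>\<epsilon>\<close>-packing of \<open>\<Theta>\<close>: functions with equal rounded
  coefficients differ by at most \<open>4 C J^(1-2k)\<close> in squared norm on the first \<open>J\<close> coordinates
  and, by the tail condition, by at most as much on the remaining ones, so they are \<open>\<epsilon>\<close>-close.
  The decay \<open>A j^(-k)\<close> of the rearranged coefficients bounds the product of \<open>1 + \<bar>q\<^sub>j\<bar>\<close> over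
  the rounded coordinates by \<open>e^O(J)\<close>, and there are at most \<open>3^J E\<^sup>2\<close> integer vectors whose
  product is at most \<open>E\<close>; hence \<open>log N = O(J)\<close>.

  Lower bound: for \<open>n \<approx> \<epsilon>^(-2/(2k-1))\<close> and \<open>a = min A \<surd>C\<close>, the functions
  \<open>a n^(-k) \<Sum>\<^sub>j\<^sub>\<in>\<^sub>T \<phi>\<^sub>j\<close>, \<open>T \<subseteq> {1..n}\<close>, lie in \<open>\<Theta>\<close>. A maximal family of such sets \<open>T\<close> with
  pairwise symmetric differences larger than \<open>n/8\<close> has \<open>e^(cn)\<close> members (Gilbert--Varshamov),
  and the corresponding functions are \<open>\<epsilon>\<close>-separated.
\<close>

section \<open>Square-integrable functions and orthonormal expansions\<close>

lemma integrable_mult_L2: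
  assumes "f \<in> L2 M" "g \<in> L2 M"
  shows "integrable M (\<lambda>x. f x * g x)"
proof (rule Bochner_Integration.integrable_bound)
  show "integrable M (\<lambda>x. (f x)\<^sup>2 + (g x)\<^sup>2)" using assms by (auto simp: L2_def)
  show "(\<lambda>x. f x * g x) \<in> borel_measurable M" using assms by (auto simp: L2_def)
  have "norm (f x * g x) \<le> norm ((f x)\<^sup>2 + (g x)\<^sup>2)" for x
  proof -
    have "2 * \<bar>f x * g x\<bar> \<le> (f x)\<^sup>2 + (g x)\<^sup>2"
      using sum_squares_bound[of "\<bar>f x\<bar>" "\<bar>g x\<bar>"] by (simp add: abs_mult)
    then show ?thesis by simp
  qed
  then show "AE x in M. norm (f x * g x) \<le> norm ((f x)\<^sup>2 + (g x)\<^sup>2)"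
    by (intro AE_I2)
qed

lemma L2_linear_combination:
  assumes "f \<in> L2 M" "g \<in> L2 M"
  shows "(\<lambda>x. a * f x + b * g x) \<in> L2 M"
proof -
  have "(\<lambda>x. (a * f x + b * g x)\<^sup>2) = (\<lambda>x. a\<^sup>2 * (f x)\<^sup>2 + (2*a*b) * (f x * g x) + b\<^sup>2 * (g x)\<^sup>2)"
    by (auto simp: power2_eq_square algebra_simps)
  moreover have "integrable M (\<lambda>x. a\<^sup>2 * (f x)\<^sup>2 + (2*a*b) * (f x * g x) + b\<^sup>2 * (g x)\<^sup>2)"
    using assms integrable_mult_L2[OF assms] by (auto simp: L2_def)
  ultimately show ?thesis using assms by (auto simp: L2_def)
qed

lemma L2_diff: "f \<in> L2 M \<Longrightarrow> g \<in> L2 M \<Longrightarrow> (\<lambda>x. f x - g x) \<in> L2 M"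
  using L2_linear_combination[of f M g 1 "-1"] by simp

lemma L2_sum:
  assumes "\<And>j. j \<in> I \<Longrightarrow> g j \<in> L2 M"
  shows "(\<lambda>x. \<Sum>j\<in>I. c j * g j x) \<in> L2 M"
  using assms
proof (induction I rule: infinite_finite_induct)
  case (insert j I)
  then have "(\<lambda>x. c j * g j x + 1 * (\<Sum>j\<in>I. c j * g j x)) \<in> L2 M"
    by (intro L2_linear_combination) auto
  then show ?case using insert by simp
qed (simp_all add: L2_def)

lemma L2_inner_diff_left:
  assumes "f \<in> L2 M" "g \<in> L2 M" "h \<in> L2 M"
  shows "L2_inner M (\<lambda>x. f x - g x) h = L2_inner M f h - L2_inner M g h"
  using integrable_mult_L2[OF assms(1,3)] integrable_mult_L2[OF assms(2,3)]
  by (simp add: L2_inner_def left_diff_distrib)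

locale L2_orthonormal_basis =
  fixes M :: "real measure" and \<phi> :: "nat \<Rightarrow> real \<Rightarrow> real"
  assumes orthonormal_basis: "orthonormal_basis_L2 M \<phi>"
begin

abbreviation basis_coeff :: "(real \<Rightarrow> real) \<Rightarrow> nat \<Rightarrow> real" where
  "basis_coeff f j \<equiv> L2_inner M f (\<phi> j)"

abbreviation coeff_tail :: "(real \<Rightarrow> real) \<Rightarrow> nat \<Rightarrow> real" where
  "coeff_tail f J \<equiv> \<Sum>i. (basis_coeff f (i + J + 1))\<^sup>2"

definition basis_sum :: "(nat \<Rightarrow> real) \<Rightarrow> nat set \<Rightarrow> real \<Rightarrow> real" where
  "basis_sum c I = (\<lambda>x. \<Sum>j\<in>I. c j * \<phi> j x)"

lemma basis_L2: "j \<ge> 1 \<Longrightarrow> \<phi> j \<in> L2 M"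
  using orthonormal_basis by (auto simp: orthonormal_basis_L2_def)

lemma basis_orthonormal:
  "i \<ge> 1 \<Longrightarrow> j \<ge> 1 \<Longrightarrow> L2_inner M (\<phi> i) (\<phi> j) = (if i = j then 1 else 0)"
  using orthonormal_basis by (auto simp: orthonormal_basis_L2_def)

lemma basis_sum_L2: "I \<subseteq> {1..} \<Longrightarrow> basis_sum c I \<in> L2 M"
  unfolding basis_sum_def by (rule L2_sum) (force intro: basis_L2)

lemma basis_sum_diff: "basis_sum c I x - basis_sum d I x = basis_sum (\<lambda>j. c j - d j) I x"
  by (simp add: basis_sum_def sum_subtractf left_diff_distrib)

lemma L2_inner_basis_sum:
  assumes "f \<in> L2 M" "finite I" "I \<subseteq> {1..}"
  shows "L2_inner M f (basis_sum c I) = (\<Sum>j\<in>I. c j * basis_coeff f j)"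
proof -
  have "L2_inner M f (basis_sum c I) = (\<integral>x. (\<Sum>j\<in>I. c j * (f x * \<phi> j x)) \<partial>M)"
    by (simp add: L2_inner_def basis_sum_def sum_distrib_left algebra_simps)
  also have "\<dots> = (\<Sum>j\<in>I. c j * basis_coeff f j)"
    using assms integrable_mult_L2 basis_L2
    by (subst Bochner_Integration.integral_sum) (auto simp: L2_inner_def)
  finally show ?thesis .
qed

lemma coeff_basis_sum:
  assumes "finite I" "I \<subseteq> {1..}" "i \<ge> 1"
  shows "basis_coeff (basis_sum c I) i = (if i \<in> I then c i else 0)"
proof -
  have "basis_coeff (basis_sum c I) i = L2_inner M (\<phi> i) (basis_sum c I)"
    by (simp add: L2_inner_def mult.commute)
  also have "\<dots> = (\<Sum>j\<in>I. c j * L2_inner M (\<phi> i) (\<phi> j))"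
    using assms basis_L2 by (simp add: L2_inner_basis_sum)
  also have "\<dots> = (\<Sum>j\<in>I. if j = i then c j else 0)"
    using assms by (intro sum.cong) (auto simp: basis_orthonormal)
  also have "\<dots> = (if i \<in> I then c i else 0)"
    using assms by (simp add: sum.delta')
  finally show ?thesis .
qed

lemma integral_square_basis_sum:
  assumes "finite I" "I \<subseteq> {1..}"
  shows "(\<integral>x. (basis_sum c I x)\<^sup>2 \<partial>M) = (\<Sum>j\<in>I. (c j)\<^sup>2)"
proof -
  have "(\<integral>x. (basis_sum c I x)\<^sup>2 \<partial>M) = L2_inner M (basis_sum c I) (basis_sum c I)"
    by (simp add: L2_inner_def power2_eq_square)
  also have "\<dots> = (\<Sum>j\<in>I. c j * basis_coeff (basis_sum c I) j)"
    by (rule L2_inner_basis_sum[OF basis_sum_L2[OF assms(2)] assms])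
  also have "\<dots> = (\<Sum>j\<in>I. (c j)\<^sup>2)"
  proof (rule sum.cong)
    fix j assume "j \<in> I"
    then show "c j * basis_coeff (basis_sum c I) j = (c j)\<^sup>2"
      using assms coeff_basis_sum[OF assms] by (auto simp: power2_eq_square)
  qed simp
  finally show ?thesis .
qed

lemma bessel_identity:
  assumes "f \<in> L2 M"
  shows "(\<integral>x. (f x - basis_sum (basis_coeff f) {1..n} x)\<^sup>2 \<partial>M)
           = (\<integral>x. (f x)\<^sup>2 \<partial>M) - (\<Sum>j=1..n. (basis_coeff f j)\<^sup>2)"
proof -
  define S where "S = basis_sum (basis_coeff f) {1..n}"
  have S: "S \<in> L2 M" unfolding S_def by (rule basis_sum_L2) auto
  have "(\<integral>x. (f x - S x)\<^sup>2 \<partial>M) = (\<integral>x. (f x)\<^sup>2 - 2 * (f x * S x) + (S x)\<^sup>2 \<partial>M)"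
    by (simp add: power2_eq_square algebra_simps)
  also have "\<dots> = (\<integral>x. (f x)\<^sup>2 \<partial>M) - 2 * L2_inner M f S + (\<integral>x. (S x)\<^sup>2 \<partial>M)"
    using assms S integrable_mult_L2[OF assms S] by (simp add: L2_def L2_inner_def)
  also have "\<dots> = (\<integral>x. (f x)\<^sup>2 \<partial>M) - (\<Sum>j=1..n. (basis_coeff f j)\<^sup>2)"
    using assms
    by (simp add: S_def L2_inner_basis_sum integral_square_basis_sum flip: power2_eq_square)
  finally show ?thesis by (simp add: S_def)
qed

lemma bessel_inequality:
  assumes "f \<in> L2 M" "finite I" "I \<subseteq> {1..}"
  shows "(\<Sum>j\<in>I. (basis_coeff f j)\<^sup>2) \<le> (\<integral>x. (f x)\<^sup>2 \<partial>M)"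
proof -
  define n where "n = Max (insert 0 I)"
  have "(\<Sum>j\<in>I. (basis_coeff f j)\<^sup>2) \<le> (\<Sum>j=1..n. (basis_coeff f j)\<^sup>2)"
    using assms by (intro sum_mono2) (auto simp: subset_iff n_def)
  moreover have "0 \<le> (\<integral>x. (f x - basis_sum (basis_coeff f) {1..n} x)\<^sup>2 \<partial>M)" by simp
  ultimately show ?thesis using bessel_identity[OF assms(1), of n] by linarith
qed

lemma parseval:
  assumes "f \<in> L2 M"
  shows "(\<lambda>n. \<Sum>j=1..n. (basis_coeff f j)\<^sup>2) \<longlonglongrightarrow> (\<integral>x. (f x)\<^sup>2 \<partial>M)"
proof -
  have "(\<lambda>n. \<integral>x. (f x - basis_sum (basis_coeff f) {1..n} x)\<^sup>2 \<partial>M) \<longlonglongrightarrow> 0"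
    using orthonormal_basis assms by (simp add: orthonormal_basis_L2_def basis_sum_def)
  then have "(\<lambda>n. (\<integral>x. (f x)\<^sup>2 \<partial>M) - (\<Sum>j=1..n. (basis_coeff f j)\<^sup>2)) \<longlonglongrightarrow> 0"
    by (simp only: bessel_identity[OF assms])
  from tendsto_diff[OF tendsto_const this, of "\<integral>x. (f x)\<^sup>2 \<partial>M"] show ?thesis by simp
qed

lemma abs_coeff_le_norm:
  assumes "f \<in> L2 M" "j \<ge> 1"
  shows "\<bar>basis_coeff f j\<bar> \<le> sqrt (\<integral>x. (f x)\<^sup>2 \<partial>M)"
proof -
  have "(basis_coeff f j)\<^sup>2 \<le> (\<integral>x. (f x)\<^sup>2 \<partial>M)"
    using bessel_inequality[OF assms(1), of "{j}"] assms(2) by simp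
  then show ?thesis by (metis real_sqrt_abs real_sqrt_le_mono)
qed

lemma coeff_diff:
  assumes "f \<in> L2 M" "g \<in> L2 M" "j \<ge> 1"
  shows "basis_coeff (\<lambda>x. f x - g x) j = basis_coeff f j - basis_coeff g j"
  using assms basis_L2 by (simp add: L2_inner_diff_left)

lemma summable_coeff_tail:
  assumes "f \<in> L2 M"
  shows "summable (\<lambda>i. (basis_coeff f (i + J + 1))\<^sup>2)"
proof (rule summableI_nonneg_bounded)
  fix n
  have "(\<Sum>i<n. (basis_coeff f (i + J + 1))\<^sup>2) = (\<Sum>j\<in>(\<lambda>i. i + J + 1) ` {..<n}. (basis_coeff f j)\<^sup>2)"
    by (simp add: sum.reindex inj_on_def)
  also have "\<dots> \<le> (\<integral>x. (f x)\<^sup>2 \<partial>M)"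
    using assms by (intro bessel_inequality) auto
  finally show "(\<Sum>i<n. (basis_coeff f (i + J + 1))\<^sup>2) \<le> (\<integral>x. (f x)\<^sup>2 \<partial>M)" .
qed simp

lemma sum_coeff_le_coeff_tail:
  assumes "f \<in> L2 M"
  shows "(\<Sum>j\<in>{J<..n}. (basis_coeff f j)\<^sup>2) \<le> coeff_tail f J"
proof -
  have "(\<Sum>j\<in>{J<..n}. (basis_coeff f j)\<^sup>2) = (\<Sum>i<n - J. (basis_coeff f (i + J + 1))\<^sup>2)"
    by (rule sum.reindex_bij_witness[where i = "\<lambda>i. i + J + 1" and j = "\<lambda>j. j - J - 1"]) auto
  also have "\<dots> \<le> coeff_tail f J"
    by (rule sum_le_suminf[OF summable_coeff_tail[OF assms]]) auto
  finally show ?thesis .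
qed

lemma integral_square_diff_le:
  assumes f: "f \<in> L2 M" and g: "g \<in> L2 M"
  shows "(\<integral>x. (f x - g x)\<^sup>2 \<partial>M)
           \<le> (\<Sum>j=1..J. (basis_coeff f j - basis_coeff g j)\<^sup>2) + 2 * coeff_tail f J + 2 * coeff_tail g J"
    (is "_ \<le> ?head + 2 * ?tail_f + 2 * ?tail_g")
proof -
  define h where "h = (\<lambda>x. f x - g x)"
  have h: "h \<in> L2 M" unfolding h_def using f g by (rule L2_diff)
  have coeff_h: "basis_coeff h j = basis_coeff f j - basis_coeff g j" if "j \<ge> 1" for j
    unfolding h_def using f g that by (rule coeff_diff)
  have "(\<Sum>j=1..n. (basis_coeff h j)\<^sup>2) \<le> ?head + 2 * ?tail_f + 2 * ?tail_g" for n
  proof -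
    have "(\<Sum>j=1..n. (basis_coeff h j)\<^sup>2) \<le> (\<Sum>j\<in>{1..J} \<union> {J<..n}. (basis_coeff h j)\<^sup>2)"
      by (intro sum_mono2) auto
    also have "\<dots> = ?head + (\<Sum>j\<in>{J<..n}. (basis_coeff f j - basis_coeff g j)\<^sup>2)"
      by (subst sum.union_disjoint) (auto simp: coeff_h)
    also have "(\<Sum>j\<in>{J<..n}. (basis_coeff f j - basis_coeff g j)\<^sup>2)
                 \<le> (\<Sum>j\<in>{J<..n}. 2 * (basis_coeff f j)\<^sup>2 + 2 * (basis_coeff g j)\<^sup>2)"
    proof (rule sum_mono)
      fix j
      show "(basis_coeff f j - basis_coeff g j)\<^sup>2 \<le> 2 * (basis_coeff f j)\<^sup>2 + 2 * (basis_coeff g j)\<^sup>2"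
        using sum_squares_bound[of "basis_coeff f j" "- basis_coeff g j"]
        by (simp add: power2_diff)
    qed
    also have "\<dots> \<le> 2 * ?tail_f + 2 * ?tail_g"
      using sum_coeff_le_coeff_tail[OF f, of J n] sum_coeff_le_coeff_tail[OF g, of J n]
      by (simp add: sum.distrib flip: sum_distrib_left)
    finally show ?thesis by simp
  qed
  then have "(\<integral>x. (h x)\<^sup>2 \<partial>M) \<le> ?head + 2 * ?tail_f + 2 * ?tail_g"
    by (intro LIMSEQ_le_const2[OF parseval[OF h]]) auto
  then show ?thesis by (simp add: h_def)
qed

end

section \<open>The decreasing rearrangement\<close>

lemma rearr_le:
  assumes "0 \<le> t" "finite {i. i \<ge> 1 \<and> t < \<bar>\<theta> i\<bar>}" "card {i. i \<ge> 1 \<and> t < \<bar>\<theta> i\<bar>} < j"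
  shows "rearr \<theta> j \<le> t"
  unfolding rearr_def using assms by (intro cInf_lower bdd_belowI[of _ 0]) auto

lemma rearr_nonneg:
  assumes "0 \<le> t" "finite {i. i \<ge> 1 \<and> t < \<bar>\<theta> i\<bar>}" "card {i. i \<ge> 1 \<and> t < \<bar>\<theta> i\<bar>} < j"
  shows "0 \<le> rearr \<theta> j"
  unfolding rearr_def using assms by (intro cInf_greatest) auto

lemma abs_rearr_le:
  assumes "\<And>i. i \<ge> 1 \<Longrightarrow> \<bar>\<theta> i\<bar> \<le> h" "0 \<le> h" "j \<ge> 1"
  shows "\<bar>rearr \<theta> j\<bar> \<le> h"
proof -
  have empty: "{i. i \<ge> 1 \<and> h < \<bar>\<theta> i\<bar>} = {}" using assms(1) by force
  show ?thesis
    using rearr_le[of h \<theta> j, unfolded empty] rearr_nonneg[of h \<theta> j, unfolded empty] assms(2,3)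
    by auto
qed

lemma rearr_eq_0:
  assumes "finite {i. i \<ge> 1 \<and> \<theta> i \<noteq> 0}" "card {i. i \<ge> 1 \<and> \<theta> i \<noteq> 0} < j"
  shows "rearr \<theta> j = 0"
proof -
  have "{i. i \<ge> 1 \<and> 0 < \<bar>\<theta> i\<bar>} = {i. i \<ge> 1 \<and> \<theta> i \<noteq> 0}" by auto
  then show ?thesis
    using rearr_le[of 0 \<theta> j] rearr_nonneg[of 0 \<theta> j] assms by simp
qed

lemma card_level_set_less_if_rearr_less:
  assumes "\<And>i. i \<ge> 1 \<Longrightarrow> \<bar>\<theta> i\<bar> \<le> B" "j \<ge> 1" "rearr \<theta> j < t"
  shows "finite {i. i \<ge> 1 \<and> t < \<bar>\<theta> i\<bar>}" "card {i. i \<ge> 1 \<and> t < \<bar>\<theta> i\<bar>} < j"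
proof -
  define S where "S = {t. 0 \<le> t \<and> finite {i. i \<ge> 1 \<and> t < \<bar>\<theta> i\<bar>} \<and> card {i. i \<ge> 1 \<and> t < \<bar>\<theta> i\<bar>} < j}"
  have empty: "{i. i \<ge> 1 \<and> max B 0 < \<bar>\<theta> i\<bar>} = {}" using assms(1) by force
  have "max B 0 \<in> S" unfolding S_def mem_Collect_eq empty using assms(2) by simp
  moreover have "bdd_below S" by (rule bdd_belowI[of _ 0]) (simp add: S_def)
  moreover have "Inf S < t" using assms(3) by (simp add: S_def rearr_def)
  ultimately obtain s where s: "s \<in> S" "s < t" using cInf_less_iff[of S t] by blast
  then have subset: "{i. i \<ge> 1 \<and> t < \<bar>\<theta> i\<bar>} \<subseteq> {i. i \<ge> 1 \<and> s < \<bar>\<theta> i\<bar>}" by auto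
  with s show "finite {i. i \<ge> 1 \<and> t < \<bar>\<theta> i\<bar>}" by (auto simp: S_def intro: finite_subset)
  with s subset show "card {i. i \<ge> 1 \<and> t < \<bar>\<theta> i\<bar>} < j"
    by (auto simp: S_def dest!: card_mono[rotated])
qed

section \<open>Elementary and combinatorial estimates\<close>

lemma sum_le_of_card_level_sets:
  fixes x a :: "nat \<Rightarrow> real" and g :: "real \<Rightarrow> real"
  assumes "finite I"
    and level: "\<And>j t. j \<ge> 1 \<Longrightarrow> a j < t \<Longrightarrow> card {i\<in>I. t < \<bar>x i\<bar>} < j"
    and mono: "\<And>u v. 0 \<le> u \<Longrightarrow> u \<le> v \<Longrightarrow> g u \<le> g v"
  shows "(\<Sum>i\<in>I. g \<bar>x i\<bar>) \<le> (\<Sum>j=1..card I. g (a j))"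
  using assms(1,2)
proof (induction "card I" arbitrary: I)
  case (Suc m)
  define v where "v = Min ((\<lambda>i. \<bar>x i\<bar>) ` I)"
  have "v \<in> (\<lambda>i. \<bar>x i\<bar>) ` I"
    unfolding v_def using Suc.prems(1) Suc.hyps(2) by (intro Min_in) auto
  then obtain i0 where i0: "i0 \<in> I" "\<bar>x i0\<bar> = v" by auto
  have v_le: "v \<le> \<bar>x i\<bar>" if "i \<in> I" for i
    using Suc.prems(1) that by (simp add: v_def)
  have "v \<le> a (Suc m)"
  proof (rule ccontr)
    assume "\<not> v \<le> a (Suc m)"
    then have "card {i\<in>I. (v + a (Suc m)) / 2 < \<bar>x i\<bar>} < Suc m"
      by (intro Suc.prems(2)) auto
    moreover have "{i\<in>I. (v + a (Suc m)) / 2 < \<bar>x i\<bar>} = I"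
      using v_le \<open>\<not> v \<le> a (Suc m)\<close> by force
    ultimately show False using Suc.hyps(2) by simp
  qed
  have card_rest: "card (I - {i0}) = m" using Suc.hyps(2) Suc.prems(1) i0(1) by simp
  have "(\<Sum>i\<in>I - {i0}. g \<bar>x i\<bar>) \<le> (\<Sum>j=1..card (I - {i0}). g (a j))"
  proof (rule Suc.hyps(1))
    fix j t assume "j \<ge> 1" "a j < t"
    then have "card {i\<in>I. t < \<bar>x i\<bar>} < j" by (rule Suc.prems(2))
    moreover have "card {i\<in>I - {i0}. t < \<bar>x i\<bar>} \<le> card {i\<in>I. t < \<bar>x i\<bar>}"
      using Suc.prems(1) by (intro card_mono) auto
    ultimately show "card {i\<in>I - {i0}. t < \<bar>x i\<bar>} < j" by linarith
  qed (use Suc.prems(1) card_rest in simp_all)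
  moreover have "g \<bar>x i0\<bar> \<le> g (a (Suc m))"
    using mono \<open>v \<le> a (Suc m)\<close> i0(2) by simp
  moreover have "(\<Sum>j=1..card I. g (a j)) = (\<Sum>j=1..m. g (a j)) + g (a (Suc m))"
    using Suc.hyps(2)[symmetric] by simp
  ultimately show ?case
    using Suc.prems(1) i0(1) card_rest by (simp add: sum.remove)
qed simp

lemma power_div_fact_le_exp:
  fixes x :: real
  assumes "0 \<le> x"
  shows "x ^ n / fact n \<le> exp x"
proof -
  have "(\<Sum>m\<in>{n}. x ^ m / fact m) \<le> (\<Sum>m. x ^ m / fact m)"
    using assms summable_exp_generic[of x]
    by (intro sum_le_suminf) (auto simp: divide_inverse mult.commute)
  then show ?thesis by (simp add: exp_def divide_inverse mult.commute)
qed

lemma sum_ln_ratio_le: "(\<Sum>j=1..n. ln (real n / real j)) \<le> real n"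
proof (cases "n = 0")
  case False
  have "ln (fact n :: real) = (\<Sum>j=1..n. ln (real j))"
    by (simp add: fact_prod) (subst ln_prod, auto)
  then have "(\<Sum>j=1..n. ln (real n / real j)) = ln (real n ^ n) - ln (fact n)"
    using False by (simp add: ln_div sum_subtractf ln_realpow)
  also have "\<dots> = ln (real n ^ n / fact n)"
    using False by (simp add: ln_div)
  also have "\<dots> \<le> ln (exp (real n))"
    using False power_div_fact_le_exp[of "real n" n] by (intro ln_mono) auto
  also have "\<dots> = real n" by simp
  finally show ?thesis .
qed simp

lemma sum_ln_decay_le:
  fixes B k :: real
  assumes "0 \<le> B" "0 \<le> k"
  shows "(\<Sum>j=1..J. ln (2 + B * (real J / real j) powr k)) \<le> real J * (ln (2 + B) + k)"
proof -
  have "ln (2 + B * (real J / real j) powr k) \<le> ln (2 + B) + k * ln (real J / real j)"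
    if "j \<in> {1..J}" for j
  proof -
    define r where "r = (real J / real j) powr k"
    have "r \<ge> 1" using that assms(2) by (auto simp: r_def intro: ge_one_powr_ge_zero)
    then have "2 + B * r \<le> (2 + B) * r" using assms(1) by (simp add: algebra_simps)
    moreover have "0 < 2 + B * r" using assms(1) \<open>r \<ge> 1\<close> by (simp add: add_pos_nonneg)
    ultimately have "ln (2 + B * r) \<le> ln ((2 + B) * r)" by (rule ln_mono)
    also have "\<dots> = ln (2 + B) + k * ln (real J / real j)"
      using that assms(1) by (simp add: r_def ln_mult ln_powr)
    finally show ?thesis by (simp add: r_def)
  qed
  then have "(\<Sum>j=1..J. ln (2 + B * (real J / real j) powr k))
               \<le> (\<Sum>j=1..J. ln (2 + B) + k * ln (real J / real j))"
    by (rule sum_mono)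
  also have "\<dots> = real J * ln (2 + B) + k * (\<Sum>j=1..J. ln (real J / real j))"
    by (simp add: sum.distrib sum_distrib_left)
  also have "\<dots> \<le> real J * ln (2 + B) + k * real J"
    using sum_ln_ratio_le[of J] assms(2) by (intro add_left_mono mult_left_mono) auto
  finally show ?thesis by (simp add: algebra_simps)
qed

lemma card_small_subsets_le:
  fixes y d :: real
  assumes "finite A" "1 \<le> y"
  shows "real (card {U\<in>Pow A. real (card U) \<le> d}) \<le> y powr d * (1 + 1/y) ^ card A"
proof -
  have "real (card {U\<in>Pow A. real (card U) \<le> d}) = (\<Sum>U\<in>{U\<in>Pow A. real (card U) \<le> d}. 1)"
    by simp
  also have "\<dots> \<le> (\<Sum>U\<in>{U\<in>Pow A. real (card U) \<le> d}. y powr d * (1/y) ^ card U)"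
  proof (rule sum_mono)
    fix U assume "U \<in> {U\<in>Pow A. real (card U) \<le> d}"
    then have "y ^ card U \<le> y powr d"
      using assms(2) by (auto simp: powr_realpow[symmetric] intro: powr_mono)
    then show "1 \<le> y powr d * (1/y) ^ card U"
      using assms(2) by (simp add: power_one_over field_simps)
  qed
  also have "\<dots> \<le> (\<Sum>U\<in>Pow A. y powr d * (1/y) ^ card U)"
    using assms by (intro sum_mono2) auto
  also have "\<dots> = y powr d * (1 + 1/y) ^ card A"
    using prod_add[OF assms(1), of "\<lambda>_. 1/y" "\<lambda>_. 1"]
    by (simp add: sum_distrib_left[symmetric] add.commute)
  finally show ?thesis .
qed

lemma card_sym_diff_translate:
  assumes "s \<subseteq> A"
  shows "card {T\<in>Pow A. P (sym_diff T s)} = card {U\<in>Pow A. P U}"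
proof -
  have involution: "sym_diff (sym_diff U s) s = U" for U by blast
  show ?thesis
    by (rule bij_betw_same_card[of "\<lambda>T. sym_diff T s"],
        rule bij_betw_byWitness[of _ "\<lambda>U. sym_diff U s"])
       (use assms in \<open>auto simp: involution\<close>)
qed

lemma exists_maximal_separated_family:
  fixes d :: real
  assumes "finite A" "0 \<le> d"
  obtains P where "P \<subseteq> Pow A"
    and "\<And>T U. T \<in> P \<Longrightarrow> U \<in> P \<Longrightarrow> T \<noteq> U \<Longrightarrow> d < real (card (sym_diff T U))"
    and "Pow A \<subseteq> (\<Union>s\<in>P. {T\<in>Pow A. real (card (sym_diff T s)) \<le> d})"
proof -
  define separated where
    "separated P \<longleftrightarrow> P \<subseteq> Pow A \<and> (\<forall>T\<in>P. \<forall>U\<in>P. T \<noteq> U \<longrightarrow> d < real (card (sym_diff T U)))"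
    for P
  have "\<forall>Q. separated Q \<longrightarrow> card Q < Suc (card (Pow A))"
    using assms(1) by (auto simp: separated_def less_Suc_eq_le intro: card_mono)
  moreover have "separated {}" by (simp add: separated_def)
  ultimately obtain P where P: "separated P" and maximal: "\<And>Q. separated Q \<Longrightarrow> card Q \<le> card P"
    using Lattices_Big.ex_has_greatest_nat[of separated "{}" card] by blast
  have finite_P: "finite P"
    using P assms(1) unfolding separated_def by (meson finite_Pow_iff finite_subset)
  have cover: "Pow A \<subseteq> (\<Union>s\<in>P. {T\<in>Pow A. real (card (sym_diff T s)) \<le> d})"
  proof
    fix T assume T: "T \<in> Pow A"
    show "T \<in> (\<Union>s\<in>P. {T\<in>Pow A. real (card (sym_diff T s)) \<le> d})"
    proof (rule ccontr)
      assume "T \<notin> (\<Union>s\<in>P. {T\<in>Pow A. real (card (sym_diff T s)) \<le> d})"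
      then have far: "d < real (card (sym_diff T s))" if "s \<in> P" for s
        using T that by force
      then have "T \<notin> P" using assms(2) by force
      have "separated (insert T P)"
        using P T far by (auto simp: separated_def Un_commute)
      then have "card (insert T P) \<le> card P" by (rule maximal)
      with \<open>T \<notin> P\<close> finite_P show False by simp
    qed
  qed
  from P have "P \<subseteq> Pow A"
    and "\<And>T U. T \<in> P \<Longrightarrow> U \<in> P \<Longrightarrow> T \<noteq> U \<Longrightarrow> d < real (card (sym_diff T U))"
    unfolding separated_def by blast+
  then show ?thesis using cover by (rule that)
qed

lemma gilbert_varshamov:
  fixes d :: real
  assumes "finite A" "0 \<le> d"
  obtains P where "P \<subseteq> Pow A"
    and "\<And>T U. T \<in> P \<Longrightarrow> U \<in> P \<Longrightarrow> T \<noteq> U \<Longrightarrow> d < real (card (sym_diff T U))"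
    and "2 ^ card A \<le> card P * card {U\<in>Pow A. real (card U) \<le> d}"
proof -
  define ball where "ball s = {T\<in>Pow A. real (card (sym_diff T s)) \<le> d}" for s
  obtain P where P: "P \<subseteq> Pow A"
    and sep: "\<And>T U. T \<in> P \<Longrightarrow> U \<in> P \<Longrightarrow> T \<noteq> U \<Longrightarrow> d < real (card (sym_diff T U))"
    and cover: "Pow A \<subseteq> (\<Union>s\<in>P. ball s)"
    using exists_maximal_separated_family[OF assms] unfolding ball_def by blast
  have "finite P" using P assms(1) by (meson finite_Pow_iff finite_subset)
  have "finite (\<Union>s\<in>P. ball s)"
    by (rule finite_subset[of _ "Pow A"]) (auto simp: ball_def assms(1))
  have "(2::nat) ^ card A = card (Pow A)" by (simp add: assms(1) card_Pow)
  also have "\<dots> \<le> card (\<Union>s\<in>P. ball s)"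
    using \<open>finite (\<Union>s\<in>P. ball s)\<close> cover by (rule card_mono)
  also have "\<dots> \<le> (\<Sum>s\<in>P. card (ball s))"
    using \<open>finite P\<close> by (rule card_UN_le)
  also have "\<dots> = (\<Sum>s\<in>P. card {U\<in>Pow A. real (card U) \<le> d})"
  proof (rule sum.cong[OF refl])
    fix s assume "s \<in> P"
    then have "s \<subseteq> A" using P by auto
    then show "card (ball s) = card {U\<in>Pow A. real (card U) \<le> d}"
      unfolding ball_def by (rule card_sym_diff_translate)
  qed
  finally have "2 ^ card A \<le> card P * card {U\<in>Pow A. real (card U) \<le> d}" by simp
  with P sep show ?thesis by (rule that)
qed

lemma separation_exponent_pos: "0 < ln 2 - ln 8 / 8 - ln (9/8 :: real)"
proof -
  have "ln ((9/8 :: real) ^ 8) < ln (2 ^ 5)" by (subst ln_less_cancel_iff) (auto simp: power_divide)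
  moreover have "ln (8 :: real) = ln (2 ^ 3)" by simp
  ultimately show ?thesis by (simp only: ln_realpow)
qed

lemma exists_separated_subsets:
  obtains P where "P \<subseteq> Pow {1..n}"
    and "\<And>T U. T \<in> P \<Longrightarrow> U \<in> P \<Longrightarrow> T \<noteq> U \<Longrightarrow> real n / 8 < real (card (sym_diff T U))"
    and "exp ((ln 2 - ln 8 / 8 - ln (9/8)) * real n) \<le> real (card P)"
proof -
  obtain P where P: "P \<subseteq> Pow {1..n}"
    "\<And>T U. T \<in> P \<Longrightarrow> U \<in> P \<Longrightarrow> T \<noteq> U \<Longrightarrow> real n / 8 < real (card (sym_diff T U))"
    and gv: "2 ^ n \<le> card P * card {U\<in>Pow {1..n}. real (card U) \<le> real n / 8}"
    using gilbert_varshamov[of "{1..n}" "real n / 8"] by auto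
  define Q where "Q = 8 powr (real n / 8) * (9/8 :: real) ^ n"
  have "(2::real) ^ n \<le> real (card P) * real (card {U\<in>Pow {1..n}. real (card U) \<le> real n / 8})"
    using gv by (metis of_nat_le_iff of_nat_mult of_nat_numeral of_nat_power)
  also have "\<dots> \<le> real (card P) * Q"
    unfolding Q_def using card_small_subsets_le[of "{1..n}" 8 "real n / 8"]
    by (intro mult_left_mono) auto
  finally have "2 ^ n / Q \<le> real (card P)" by (simp add: Q_def divide_le_eq)
  moreover have "exp ((ln 2 - ln 8 / 8 - ln (9/8)) * real n)
                   = exp (real n * ln 2) / (exp (real n / 8 * ln 8) * exp (real n * ln (9/8)))"
    by (simp add: exp_diff exp_add algebra_simps)
  moreover have "\<dots> = 2 ^ n / Q"
    by (simp add: Q_def powr_def flip: powr_realpow)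
  ultimately show ?thesis using that[OF P] by simp
qed

lemma sum_inverse_square_le:
  "(\<Sum>z\<in>{-int N..int N}. 1 / (1 + \<bar>real_of_int z\<bar>)\<^sup>2) \<le> 3 - 2 / (real N + 1)"
proof (induction N)
  case (Suc N)
  have "{-int (Suc N)..int (Suc N)} = insert (int (Suc N)) (insert (- int (Suc N)) {-int N..int N})"
    by auto
  then have "(\<Sum>z\<in>{-int (Suc N)..int (Suc N)}. 1 / (1 + \<bar>real_of_int z\<bar>)\<^sup>2)
               = 2 / (real N + 2)\<^sup>2 + (\<Sum>z\<in>{-int N..int N}. 1 / (1 + \<bar>real_of_int z\<bar>)\<^sup>2)"
    by (simp add: add.commute)
  also have "2 / (real N + 2)\<^sup>2 \<le> 2 / ((real N + 1) * (real N + 2))"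
    by (rule divide_left_mono) (auto simp: power2_eq_square)
  also have "\<dots> = 2 / (real N + 1) - 2 / (real N + 2)"
    by (simp add: field_simps)
  finally show ?case using Suc.IH by (simp add: add.commute)
qed simp

lemma member_le_prod:
  fixes x :: "'a \<Rightarrow> real"
  assumes "finite I" "j \<in> I" "\<And>i. i \<in> I \<Longrightarrow> 1 \<le> x i"
  shows "x j \<le> (\<Prod>i\<in>I. x i)"
proof -
  have "x j * 1 \<le> x j * (\<Prod>i\<in>I - {j}. x i)"
    using assms(2,3) by (intro mult_left_mono prod_ge_1) (auto, fastforce)
  also have "\<dots> = (\<Prod>i\<in>I. x i)"
    using assms(1,2) by (simp add: prod.remove)
  finally show ?thesis by simp
qed

lemma mem_box_if_prod_le:
  assumes "finite I" "v \<in> PiE I (\<lambda>_. UNIV)" "(\<Prod>j\<in>I. 1 + \<bar>real_of_int (v j)\<bar>) \<le> E"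
  shows "v \<in> PiE I (\<lambda>_. {-int (nat \<lceil>E\<rceil>)..int (nat \<lceil>E\<rceil>)})"
proof (rule PiE_I)
  fix j assume "j \<in> I"
  then have "1 + \<bar>real_of_int (v j)\<bar> \<le> E"
    using member_le_prod[OF assms(1), of j "\<lambda>i. 1 + \<bar>real_of_int (v i)\<bar>"] assms(3) by simp
  then have "\<bar>real_of_int (v j)\<bar> \<le> real (nat \<lceil>E\<rceil>)"
    using real_nat_ceiling_ge[of E] by linarith
  then have "\<bar>v j\<bar> \<le> int (nat \<lceil>E\<rceil>)" by (metis of_int_abs of_int_le_iff of_int_of_nat_eq)
  then show "v j \<in> {-int (nat \<lceil>E\<rceil>)..int (nat \<lceil>E\<rceil>)}" by (simp add: abs_le_iff)
next
  fix j assume "j \<notin> I"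
  then show "v j = undefined" using assms(2) by blast
qed

lemma sum_inverse_square_PiE_le:
  assumes "finite I"
  shows "(\<Sum>v\<in>PiE I (\<lambda>_. {-int N..int N}). \<Prod>j\<in>I. 1 / (1 + \<bar>real_of_int (v j)\<bar>)\<^sup>2)
           \<le> 3 ^ card I"
proof -
  have "(\<Sum>v\<in>PiE I (\<lambda>_. {-int N..int N}). \<Prod>j\<in>I. 1 / (1 + \<bar>real_of_int (v j)\<bar>)\<^sup>2)
          = (\<Prod>j\<in>I. \<Sum>z\<in>{-int N..int N}. 1 / (1 + \<bar>real_of_int z\<bar>)\<^sup>2)"
    using assms by (rule prod_sum_PiE[symmetric]) auto
  also have "\<dots> \<le> 3 ^ card I"
  proof (rule prod_le_power)
    have "0 \<le> 2 / (real N + 1)" by simp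
    then have "(\<Sum>z\<in>{-int N..int N}. 1 / (1 + \<bar>real_of_int z\<bar>)\<^sup>2) \<le> 3"
      using sum_inverse_square_le[of N] by linarith
    then show "0 \<le> (\<Sum>z\<in>{-int N..int N}. 1 / (1 + \<bar>real_of_int z\<bar>)\<^sup>2)
                \<and> (\<Sum>z\<in>{-int N..int N}. 1 / (1 + \<bar>real_of_int z\<bar>)\<^sup>2) \<le> 3"
      by (simp add: sum_nonneg)
  qed simp_all
  finally show ?thesis .
qed

lemma card_lattice_points_prod_le:
  assumes "finite I" "X \<subseteq> PiE I (\<lambda>_. UNIV)"
    and bound: "\<And>v. v \<in> X \<Longrightarrow> (\<Prod>j\<in>I. 1 + \<bar>real_of_int (v j)\<bar>) \<le> E"
  shows "real (card X) \<le> 3 ^ card I * E\<^sup>2"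
proof (cases "X = {}")
  case False
  then obtain v0 where "v0 \<in> X" by blast
  then have E: "1 \<le> E"
    using bound[of v0] prod_ge_1[of I "\<lambda>i. 1 + \<bar>real_of_int (v0 i)\<bar>"] by simp
  have box: "X \<subseteq> PiE I (\<lambda>_. {-int (nat \<lceil>E\<rceil>)..int (nat \<lceil>E\<rceil>)})"
    using assms mem_box_if_prod_le by blast
  \<comment> \<open>Weigh each point \<open>v\<close> by \<open>\<Prod>j\<in>I. 1 / (1 + \<bar>v j\<bar>)\<^sup>2\<close>: points of \<open>X\<close> weigh at least \<open>1/E\<^sup>2\<close>.\<close>
  have "real (card X) / E\<^sup>2 = (\<Sum>v\<in>X. 1 / E\<^sup>2)" by simp
  also have "\<dots> \<le> (\<Sum>v\<in>X. \<Prod>j\<in>I. 1 / (1 + \<bar>real_of_int (v j)\<bar>)\<^sup>2)"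
  proof (rule sum_mono)
    fix v assume v: "v \<in> X"
    have "1 \<le> (\<Prod>j\<in>I. 1 + \<bar>real_of_int (v j)\<bar>)" by (intro prod_ge_1) auto
    then have "1 / E\<^sup>2 \<le> 1 / (\<Prod>j\<in>I. 1 + \<bar>real_of_int (v j)\<bar>)\<^sup>2"
      using bound[OF v] by (intro divide_left_mono power_mono) auto
    then show "1 / E\<^sup>2 \<le> (\<Prod>j\<in>I. 1 / (1 + \<bar>real_of_int (v j)\<bar>)\<^sup>2)"
      by (simp add: prod_dividef power_divide prod_power_distrib[symmetric])
  qed
  also have "\<dots> \<le> (\<Sum>v\<in>PiE I (\<lambda>_. {-int (nat \<lceil>E\<rceil>)..int (nat \<lceil>E\<rceil>)}).
                       \<Prod>j\<in>I. 1 / (1 + \<bar>real_of_int (v j)\<bar>)\<^sup>2)"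
    using assms(1) box by (intro sum_mono2 finite_PiE) (auto intro: prod_nonneg)
  also have "\<dots> \<le> 3 ^ card I"
    using assms(1) by (rule sum_inverse_square_PiE_le)
  finally show ?thesis using E by (simp add: field_simps)
qed simp

lemma powr_root_scale:
  fixes r c \<epsilon> :: real
  assumes r: "0 < r" and c: "0 < c" and \<epsilon>: "0 < \<epsilon>" "\<epsilon>\<^sup>2 \<le> c"
  defines "x \<equiv> (c / \<epsilon>\<^sup>2) powr (1/r)"
  shows "x = c powr (1/r) * \<epsilon> powr (-2/r)"
    and "1 \<le> x"
    and "\<And>y. 0 < y \<Longrightarrow> c * y powr (-r) = \<epsilon>\<^sup>2 * (x powr r / y powr r)"
proof -
  have "x = c powr (1/r) / (\<epsilon>\<^sup>2) powr (1/r)"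
    using c \<epsilon>(1) by (simp add: x_def powr_divide)
  also have "(\<epsilon>\<^sup>2) powr (1/r) = \<epsilon> powr (2/r)"
    using \<epsilon>(1) powr_powr[of \<epsilon> 2 "1/r"] by simp
  finally show "x = c powr (1/r) * \<epsilon> powr (-2/r)"
    by (simp add: powr_minus divide_inverse flip: minus_divide_left)
  have "1 \<le> c / \<epsilon>\<^sup>2" using \<epsilon> by simp
  then show "1 \<le> x" using r by (simp add: x_def ge_one_powr_ge_zero)
  have "x powr r = c / \<epsilon>\<^sup>2" using r c by (simp add: x_def powr_powr)
  then show "c * y powr (-r) = \<epsilon>\<^sup>2 * (x powr r / y powr r)" if "0 < y" for y
    using \<epsilon>(1) by (simp add: powr_minus divide_inverse)
qed

lemma exists_nat_powr_neg_le:
  fixes r c \<epsilon> :: real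
  assumes "0 < r" "0 < c" "0 < \<epsilon>" "\<epsilon>\<^sup>2 \<le> c"
  obtains J :: nat where "1 \<le> J" "c * real J powr (-r) \<le> \<epsilon>\<^sup>2"
    and "real J \<le> 2 * (c powr (1/r) * \<epsilon> powr (-2/r))"
proof -
  define x where "x = (c / \<epsilon>\<^sup>2) powr (1/r)"
  note x = powr_root_scale[OF assms, folded x_def]
  define J where "J = nat \<lceil>x\<rceil>"
  have J: "1 \<le> J" using x(2) by (simp add: J_def) linarith
  have "x \<le> real J" using x(2) by (simp add: J_def le_of_int_ceiling)
  then have "x powr r \<le> real J powr r" using assms(1) x(2) by (intro powr_mono2) auto
  then have "c * real J powr (-r) \<le> \<epsilon>\<^sup>2"
    using x(3)[of "real J"] J assms(3) by (simp add: divide_le_eq)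
  moreover have "real J \<le> 2 * x"
    using x(2) of_int_ceiling_le_add_one[of x] by (simp add: J_def) linarith
  ultimately show ?thesis unfolding x(1) by (rule that[OF J])
qed

lemma exists_nat_powr_neg_ge:
  fixes r c \<epsilon> :: real
  assumes "0 < r" "0 < c" "0 < \<epsilon>" "\<epsilon>\<^sup>2 \<le> c"
  obtains n :: nat where "1 \<le> n" "\<epsilon>\<^sup>2 \<le> c * real n powr (-r)"
    and "c powr (1/r) * \<epsilon> powr (-2/r) \<le> 2 * real n"
proof -
  define x where "x = (c / \<epsilon>\<^sup>2) powr (1/r)"
  note x = powr_root_scale[OF assms, folded x_def]
  define n where "n = nat \<lfloor>x\<rfloor>"
  have n: "1 \<le> n" using x(2) by (simp add: n_def) linarith
  have "real n \<le> x" using x(2) by (simp add: n_def)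
  then have "real n powr r \<le> x powr r" using assms(1) by (intro powr_mono2) auto
  then have "\<epsilon>\<^sup>2 \<le> c * real n powr (-r)"
    using x(3)[of "real n"] n assms(3) by (simp add: le_divide_eq)
  moreover have "x \<le> 2 * real n"
  proof -
    have "real n = real_of_int \<lfloor>x\<rfloor>" using x(2) by (simp add: n_def)
    moreover have "x < real_of_int \<lfloor>x\<rfloor> + 1" by linarith
    moreover have "1 \<le> real_of_int \<lfloor>x\<rfloor>" using x(2) by (simp add: le_floor_iff)
    ultimately show ?thesis by linarith
  qed
  ultimately show ?thesis unfolding x(1) by (rule that[OF n])
qed

lemma powr_neg_square_mult:
  fixes a x k :: real
  assumes "0 < x"
  shows "(a * x powr (-k))\<^sup>2 * x = a\<^sup>2 * x powr (1 - 2*k)"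
proof -
  have "1 - 2*k = -k + -k + 1" by simp
  then have "x powr (1 - 2*k) = x powr (-k) * x powr (-k) * x"
    using assms by (simp only: powr_add powr_one)
  then show ?thesis by (simp add: power2_eq_square)
qed

definition L2_packing :: "real measure \<Rightarrow> real \<Rightarrow> (real \<Rightarrow> real) set \<Rightarrow> (real \<Rightarrow> real) set \<Rightarrow> bool" where
  "L2_packing M \<epsilon> F S \<longleftrightarrow> finite S \<and> S \<subseteq> F \<and> (\<forall>f\<in>S. \<forall>g\<in>S. f \<noteq> g \<longrightarrow> \<epsilon> < L2_dist M f g)"

lemma metric_entropy_bounds:
  assumes packing: "L2_packing M \<epsilon> F S\<^sub>0" and large: "exp a \<le> real (card S\<^sub>0)"
    and bound: "\<And>S. L2_packing M \<epsilon> F S \<Longrightarrow> real (card S) \<le> exp b"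
  shows "packing_number M \<epsilon> F \<noteq> \<infinity>"
    and "a \<le> metric_entropy M \<epsilon> F"
    and "metric_entropy M \<epsilon> F \<le> b"
proof -
  define X where "X = {enat (card S) | S. L2_packing M \<epsilon> F S}"
  have number: "packing_number M \<epsilon> F = Sup X"
    by (simp add: packing_number_def X_def L2_packing_def)
  have "x \<le> enat (nat \<lfloor>exp b\<rfloor>)" if "x \<in> X" for x
    using that bound by (auto simp: X_def le_nat_floor)
  then have "Sup X \<le> enat (nat \<lfloor>exp b\<rfloor>)" by (rule Sup_least)
  then obtain m where m: "Sup X = enat m" "m \<le> nat \<lfloor>exp b\<rfloor>"
    by (cases "Sup X") auto
  have "enat (card S\<^sub>0) \<le> Sup X"
    using packing by (intro Sup_upper) (auto simp: X_def)
  then have lower: "exp a \<le> real m" using m(1) large by simp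
  have "int m \<le> \<lfloor>exp b\<rfloor>" using m(2) by (simp add: le_nat_iff)
  then have upper: "real m \<le> exp b" by (simp add: le_floor_iff)
  have entropy: "metric_entropy M \<epsilon> F = ln (real m)"
    by (simp add: metric_entropy_def number m(1))
  show "packing_number M \<epsilon> F \<noteq> \<infinity>" by (simp add: number m(1))
  show "a \<le> metric_entropy M \<epsilon> F"
    using ln_mono[OF lower exp_gt_zero] by (simp add: entropy)
  show "metric_entropy M \<epsilon> F \<le> b"
    using ln_mono[OF upper] lower exp_gt_zero[of a] by (simp add: entropy)
qed

section \<open>The approximate sparsity class\<close>

locale sparsity_class = L2_orthonormal_basis +
  fixes A k C :: real
  assumes A_pos: "0 < A" and k_gt: "1/2 < k" and C_pos: "0 < C"
begin

abbreviation \<Theta> :: "(real \<Rightarrow> real) set" where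
  "\<Theta> \<equiv> Theta M \<phi> k A C"

lemma mem_Theta_iff:
  "f \<in> \<Theta> \<longleftrightarrow> f \<in> L2 M \<and> (\<forall>j\<ge>1. \<bar>rearr (basis_coeff f) j\<bar> \<le> A * real j powr (-k))
                     \<and> (\<forall>J\<ge>1. coeff_tail f J \<le> C * real J powr (1 - 2*k))"
proof -
  have "-2*k + 1 = 1 - 2*k" by simp
  then show ?thesis by (simp only: Theta_def Let_def mem_Collect_eq)
qed

definition cube_scale :: real where
  "cube_scale = min A (sqrt C)"

lemma cube_scale_pos: "0 < cube_scale"
  using A_pos C_pos by (simp add: cube_scale_def)

definition cube_vertex :: "nat \<Rightarrow> nat set \<Rightarrow> real \<Rightarrow> real" where
  "cube_vertex n T = basis_sum (\<lambda>j. cube_scale * real n powr (-k) * of_bool (j \<in> T)) {1..n}"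

lemma coeff_cube_vertex:
  assumes "T \<subseteq> {1..n}" "i \<ge> 1"
  shows "basis_coeff (cube_vertex n T) i = (if i \<in> T then cube_scale * real n powr (-k) else 0)"
  using assms by (auto simp: cube_vertex_def coeff_basis_sum)

lemma integral_square_cube_vertex_diff:
  assumes "T \<subseteq> {1..n}" "U \<subseteq> {1..n}"
  shows "(\<integral>x. (cube_vertex n T x - cube_vertex n U x)\<^sup>2 \<partial>M)
           = (cube_scale * real n powr (-k))\<^sup>2 * real (card (sym_diff T U))"
proof -
  let ?h = "cube_scale * real n powr (-k)"
  have "(\<integral>x. (cube_vertex n T x - cube_vertex n U x)\<^sup>2 \<partial>M)
          = (\<Sum>j\<in>{1..n}. (?h * of_bool (j \<in> T) - ?h * of_bool (j \<in> U))\<^sup>2)"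
    by (simp add: cube_vertex_def basis_sum_diff integral_square_basis_sum)
  also have "\<dots> = (\<Sum>j\<in>{1..n}. ?h\<^sup>2 * of_bool (j \<in> sym_diff T U))"
    by (intro sum.cong) (auto simp: power2_eq_square)
  also have "\<dots> = ?h\<^sup>2 * real (card ({1..n} \<inter> {j. j \<in> sym_diff T U}))"
    by (simp only: sum_distrib_left[symmetric]
                   sum_of_bool_eq[OF finite_atLeastAtMost finite_atLeastAtMost])
  also have "{1..n} \<inter> {j. j \<in> sym_diff T U} = sym_diff T U"
    using assms by auto
  finally show ?thesis .
qed

lemma abs_rearr_coeff_cube_vertex_le:
  assumes n: "n \<ge> 1" and T: "T \<subseteq> {1..n}" and j: "j \<ge> 1"
  shows "\<bar>rearr (basis_coeff (cube_vertex n T)) j\<bar> \<le> A * real j powr (-k)"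
proof -
  let ?h = "cube_scale * real n powr (-k)"
  define \<theta> where "\<theta> = basis_coeff (cube_vertex n T)"
  have \<theta>: "\<theta> i = (if i \<in> T then ?h else 0)" if "i \<ge> 1" for i
    unfolding \<theta>_def using T that by (rule coeff_cube_vertex)
  show ?thesis
  proof (cases "j \<le> n")
    case True
    have "\<bar>rearr \<theta> j\<bar> \<le> ?h"
      using cube_scale_pos j by (intro abs_rearr_le) (auto simp: \<theta>)
    also have "\<dots> \<le> A * real j powr (-k)"
      using True j k_gt cube_scale_pos by (intro mult_mono powr_mono2') (auto simp: cube_scale_def)
    finally show ?thesis by (simp add: \<theta>_def)
  next
    case False
    have support: "{i. i \<ge> 1 \<and> \<theta> i \<noteq> 0} \<subseteq> T" using \<theta> by (auto split: if_splits)
    have "finite T" "card T \<le> n"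
      using T finite_subset[OF T] card_mono[OF _ T] by auto
    then have "rearr \<theta> j = 0"
      using False card_mono[OF \<open>finite T\<close> support]
      by (intro rearr_eq_0 finite_subset[OF support]) auto
    then show ?thesis using A_pos by (simp add: \<theta>_def)
  qed
qed

lemma coeff_tail_cube_vertex_le:
  assumes n: "n \<ge> 1" and T: "T \<subseteq> {1..n}" and J: "J \<ge> 1"
  shows "coeff_tail (cube_vertex n T) J \<le> C * real J powr (1 - 2*k)"
proof -
  let ?h = "cube_scale * real n powr (-k)"
  define N where "N = {i. i + J + 1 \<in> T}"
  have N: "N \<subseteq> {..<n}" using T by (auto simp: N_def)
  then have "finite N" by (rule finite_subset) simp
  then have "coeff_tail (cube_vertex n T) J = (\<Sum>i\<in>N. ?h\<^sup>2)"
    using T by (subst suminf_finite[of N]) (auto simp: N_def coeff_cube_vertex)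
  also have "\<dots> = real (card N) * ?h\<^sup>2" by simp
  also have "\<dots> \<le> C * real J powr (1 - 2*k)"
  proof (cases "N = {}")
    case False
    then have "J \<le> n" using T by (auto simp: N_def)
    have "real (card N) * ?h\<^sup>2 \<le> ?h\<^sup>2 * real n"
      using card_mono[OF _ N] by (simp add: mult.commute mult_right_mono)
    also have "\<dots> = cube_scale\<^sup>2 * real n powr (1 - 2*k)"
      using n by (simp add: powr_neg_square_mult)
    also have "\<dots> \<le> C * real J powr (1 - 2*k)"
    proof (rule mult_mono)
      show "cube_scale\<^sup>2 \<le> C"
        using cube_scale_pos C_pos real_sqrt_le_iff[of "cube_scale\<^sup>2" C]
        by (simp add: cube_scale_def)
      show "real n powr (1 - 2*k) \<le> real J powr (1 - 2*k)"
        using J \<open>J \<le> n\<close> k_gt by (intro powr_mono2') auto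
    qed (use C_pos in auto)
    finally show ?thesis .
  qed (use C_pos in simp)
  finally show ?thesis .
qed

lemma cube_vertex_in_Theta:
  assumes "n \<ge> 1" "T \<subseteq> {1..n}"
  shows "cube_vertex n T \<in> \<Theta>"
  using assms abs_rearr_coeff_cube_vertex_le coeff_tail_cube_vertex_le
  by (simp add: mem_Theta_iff cube_vertex_def basis_sum_L2)

lemma exists_large_packing:
  assumes n: "n \<ge> 1" and \<epsilon>: "8 * \<epsilon>\<^sup>2 \<le> cube_scale\<^sup>2 * real n powr (1 - 2*k)"
  obtains S where "L2_packing M \<epsilon> \<Theta> S"
    and "exp ((ln 2 - ln 8 / 8 - ln (9/8)) * real n) \<le> real (card S)"
proof -
  let ?h = "cube_scale * real n powr (-k)"
  obtain P where P: "P \<subseteq> Pow {1..n}"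
    and sep: "\<And>T U. T \<in> P \<Longrightarrow> U \<in> P \<Longrightarrow> T \<noteq> U \<Longrightarrow> real n / 8 < real (card (sym_diff T U))"
    and card_P: "exp ((ln 2 - ln 8 / 8 - ln (9/8)) * real n) \<le> real (card P)"
    using exists_separated_subsets[of n] by blast
  have far: "\<epsilon>\<^sup>2 < (\<integral>x. (cube_vertex n T x - cube_vertex n U x)\<^sup>2 \<partial>M)"
    if "T \<in> P" "U \<in> P" "T \<noteq> U" for T U
  proof -
    have "\<epsilon>\<^sup>2 \<le> ?h\<^sup>2 * (real n / 8)"
      using \<epsilon> n powr_neg_square_mult[of "real n" cube_scale k] by simp
    also have "\<dots> < ?h\<^sup>2 * real (card (sym_diff T U))"
      using sep[OF that] cube_scale_pos n by (intro mult_strict_left_mono) auto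
    also have "\<dots> = (\<integral>x. (cube_vertex n T x - cube_vertex n U x)\<^sup>2 \<partial>M)"
      using P that by (intro integral_square_cube_vertex_diff[symmetric]) auto
    finally show ?thesis .
  qed
  have "inj_on (cube_vertex n) P"
  proof (rule inj_onI, rule ccontr)
    fix T U assume "T \<in> P" "U \<in> P" "cube_vertex n T = cube_vertex n U" "T \<noteq> U"
    then show False using far[of T U] by simp
  qed
  moreover have "finite P" using P by (rule finite_subset) simp
  moreover have "cube_vertex n ` P \<subseteq> \<Theta>" using P n cube_vertex_in_Theta by auto
  moreover have "\<epsilon> < L2_dist M (cube_vertex n T) (cube_vertex n U)"
    if "T \<in> P" "U \<in> P" "T \<noteq> U" for T U
    unfolding L2_dist_def using far[OF that] by (rule real_less_rsqrt)
  ultimately show ?thesis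
    using card_P by (intro that[of "cube_vertex n ` P"]) (auto simp: L2_packing_def card_image)
qed

definition quant_step :: "nat \<Rightarrow> real" where
  "quant_step J = 2 * sqrt C * real J powr (-k)"

definition quantize :: "nat \<Rightarrow> (real \<Rightarrow> real) \<Rightarrow> nat \<Rightarrow> int" where
  "quantize J f = restrict (\<lambda>j. \<lfloor>basis_coeff f j / quant_step J\<rfloor>) {1..J}"

lemma quant_step_pos: "J \<ge> 1 \<Longrightarrow> 0 < quant_step J"
  using C_pos by (simp add: quant_step_def)

lemma L2_dist_le_if_quantize_eq:
  assumes f: "f \<in> \<Theta>" and g: "g \<in> \<Theta>" and J: "J \<ge> 1" and eq: "quantize J f = quantize J g"
  shows "L2_dist M f g \<le> sqrt (8 * C * real J powr (1 - 2*k))"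
proof -
  let ?\<delta> = "quant_step J"
  have "(basis_coeff f j - basis_coeff g j)\<^sup>2 \<le> ?\<delta>\<^sup>2" if "j \<in> {1..J}" for j
  proof -
    have "\<lfloor>basis_coeff f j / ?\<delta>\<rfloor> = \<lfloor>basis_coeff g j / ?\<delta>\<rfloor>"
      using fun_cong[OF eq, of j] that by (simp add: quantize_def)
    then have "\<bar>basis_coeff f j / ?\<delta> - basis_coeff g j / ?\<delta>\<bar> < 1" by linarith
    then have "\<bar>basis_coeff f j - basis_coeff g j\<bar> \<le> \<bar>?\<delta>\<bar>"
      using quant_step_pos[OF J] by (simp add: diff_divide_distrib[symmetric] abs_divide)
    then show ?thesis by (simp only: abs_le_square_iff)
  qed
  then have "(\<Sum>j=1..J. (basis_coeff f j - basis_coeff g j)\<^sup>2) \<le> real J * ?\<delta>\<^sup>2"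
    using sum_mono[of "{1..J}" "\<lambda>j. (basis_coeff f j - basis_coeff g j)\<^sup>2" "\<lambda>_. ?\<delta>\<^sup>2"] by simp
  also have "\<dots> = 4 * C * real J powr (1 - 2*k)"
    using J C_pos powr_neg_square_mult[of "real J" "2 * sqrt C" k]
    by (simp add: quant_step_def mult.commute power_mult_distrib)
  moreover have "coeff_tail f J \<le> C * real J powr (1 - 2*k)"
    and "coeff_tail g J \<le> C * real J powr (1 - 2*k)"
    using f g J by (simp_all add: mem_Theta_iff)
  moreover have "f \<in> L2 M" "g \<in> L2 M" using f g by (simp_all add: mem_Theta_iff)
  ultimately have "(\<integral>x. (f x - g x)\<^sup>2 \<partial>M) \<le> 8 * C * real J powr (1 - 2*k)"
    using integral_square_diff_le[of f g J] by linarith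
  then show ?thesis by (simp add: L2_dist_def)
qed

lemma quantize_inj_on_packing:
  assumes "J \<ge> 1" "8 * C * real J powr (1 - 2*k) \<le> \<epsilon>\<^sup>2" "0 \<le> \<epsilon>" "L2_packing M \<epsilon> \<Theta> S"
  shows "inj_on (quantize J) S"
proof (rule inj_onI, rule ccontr)
  fix f g assume "f \<in> S" "g \<in> S" "quantize J f = quantize J g" "f \<noteq> g"
  then have "\<epsilon> < L2_dist M f g" "L2_dist M f g \<le> sqrt (8 * C * real J powr (1 - 2*k))"
    using assms L2_dist_le_if_quantize_eq[of f g J] by (auto simp: L2_packing_def)
  moreover have "sqrt (8 * C * real J powr (1 - 2*k)) \<le> \<epsilon>"
    using real_sqrt_le_mono[OF assms(2)] assms(3) by simp
  ultimately show False by simp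
qed

lemma Theta_card_level_set_less:
  assumes f: "f \<in> \<Theta>" and j: "j \<ge> 1" and t: "A * real j powr (-k) < t"
  shows "finite {i. i \<ge> 1 \<and> t < \<bar>basis_coeff f i\<bar>}" "card {i. i \<ge> 1 \<and> t < \<bar>basis_coeff f i\<bar>} < j"
proof -
  have bounded: "\<bar>basis_coeff f i\<bar> \<le> sqrt (\<integral>x. (f x)\<^sup>2 \<partial>M)" if "i \<ge> 1" for i
    using f that abs_coeff_le_norm by (simp add: mem_Theta_iff)
  have "rearr (basis_coeff f) j < t" using f j t by (fastforce simp: mem_Theta_iff)
  then show "finite {i. i \<ge> 1 \<and> t < \<bar>basis_coeff f i\<bar>}"
    and "card {i. i \<ge> 1 \<and> t < \<bar>basis_coeff f i\<bar>} < j"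
    using card_level_set_less_if_rearr_less[OF bounded j] by auto
qed

lemma prod_quantize_le:
  assumes f: "f \<in> \<Theta>" and J: "J \<ge> 1"
  shows "(\<Prod>j\<in>{1..J}. 1 + \<bar>real_of_int (quantize J f j)\<bar>)
           \<le> exp (real J * (ln (2 + A / (2 * sqrt C)) + k))"
proof -
  let ?\<delta> = "quant_step J"
  define \<theta> where "\<theta> = basis_coeff f"
  have \<delta>: "0 < ?\<delta>" using J by (rule quant_step_pos)
  have "(\<Prod>j\<in>{1..J}. 1 + \<bar>real_of_int (quantize J f j)\<bar>) \<le> (\<Prod>j\<in>{1..J}. 2 + \<bar>\<theta> j\<bar> / ?\<delta>)"
  proof (rule prod_mono)
    fix j assume "j \<in> {1..J}"
    then have "quantize J f j = \<lfloor>\<theta> j / ?\<delta>\<rfloor>" by (simp add: quantize_def \<theta>_def)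
    moreover have "real_of_int \<lfloor>\<theta> j / ?\<delta>\<rfloor> \<le> \<theta> j / ?\<delta>" "\<theta> j / ?\<delta> < real_of_int \<lfloor>\<theta> j / ?\<delta>\<rfloor> + 1"
      by linarith+
    ultimately have "\<bar>real_of_int (quantize J f j)\<bar> \<le> \<bar>\<theta> j / ?\<delta>\<bar> + 1" by linarith
    then show "0 \<le> 1 + \<bar>real_of_int (quantize J f j)\<bar>
               \<and> 1 + \<bar>real_of_int (quantize J f j)\<bar> \<le> 2 + \<bar>\<theta> j\<bar> / ?\<delta>"
      using \<delta> by (simp add: abs_divide)
  qed
  also have "\<dots> = exp (\<Sum>j\<in>{1..J}. ln (2 + \<bar>\<theta> j\<bar> / ?\<delta>))"
    using \<delta> by (simp add: exp_sum add_pos_nonneg)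
  also have "(\<Sum>j\<in>{1..J}. ln (2 + \<bar>\<theta> j\<bar> / ?\<delta>))
               \<le> (\<Sum>j=1..card {1..J}. ln (2 + A * real j powr (-k) / ?\<delta>))"
  proof (rule sum_le_of_card_level_sets)
    fix j t assume "j \<ge> 1" "A * real j powr (-k) < t"
    then have "finite {i. i \<ge> 1 \<and> t < \<bar>\<theta> i\<bar>}" "card {i. i \<ge> 1 \<and> t < \<bar>\<theta> i\<bar>} < j"
      using Theta_card_level_set_less[OF f] unfolding \<theta>_def by auto
    moreover have "card {i\<in>{1..J}. t < \<bar>\<theta> i\<bar>} \<le> card {i. i \<ge> 1 \<and> t < \<bar>\<theta> i\<bar>}"
      using calculation(1) by (intro card_mono) auto
    ultimately show "card {i\<in>{1..J}. t < \<bar>\<theta> i\<bar>} < j" by linarith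
  next
    fix u v :: real assume "0 \<le> u" "u \<le> v"
    then show "ln (2 + u / ?\<delta>) \<le> ln (2 + v / ?\<delta>)"
      using \<delta> by (intro ln_mono) (auto simp: divide_right_mono add_pos_nonneg)
  qed simp
  also have "(\<Sum>j=1..card {1..J}. ln (2 + A * real j powr (-k) / ?\<delta>))
               = (\<Sum>j=1..J. ln (2 + A / (2 * sqrt C) * (real J / real j) powr k))"
    using J by (intro sum.cong) (auto simp: quant_step_def powr_minus powr_divide field_simps)
  also have "\<dots> \<le> real J * (ln (2 + A / (2 * sqrt C)) + k)"
    using A_pos C_pos k_gt by (intro sum_ln_decay_le) auto
  finally show ?thesis by simp
qed

lemma card_packing_le:
  assumes J: "J \<ge> 1" and \<epsilon>: "8 * C * real J powr (1 - 2*k) \<le> \<epsilon>\<^sup>2" "0 \<le> \<epsilon>"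
    and S: "L2_packing M \<epsilon> \<Theta> S"
  shows "real (card S) \<le> exp (real J * (ln 3 + 2 * (ln (2 + A / (2 * sqrt C)) + k)))"
proof -
  let ?E = "exp (real J * (ln (2 + A / (2 * sqrt C)) + k))"
  have "card S = card (quantize J ` S)"
    using quantize_inj_on_packing[OF J \<epsilon> S] by (simp add: card_image)
  also have "real (card (quantize J ` S)) \<le> 3 ^ card {1..J} * ?E\<^sup>2"
  proof (rule card_lattice_points_prod_le)
    show "quantize J ` S \<subseteq> PiE {1..J} (\<lambda>_. UNIV)" by (auto simp: quantize_def)
    show "(\<Prod>j\<in>{1..J}. 1 + \<bar>real_of_int (v j)\<bar>) \<le> ?E" if "v \<in> quantize J ` S" for v
      using that S prod_quantize_le J by (auto simp: L2_packing_def)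
  qed simp
  also have "3 ^ card {1..J} * ?E\<^sup>2 = exp (real J * (ln 3 + 2 * (ln (2 + A / (2 * sqrt C)) + k)))"
  proof -
    have "(3::real) ^ card {1..J} = exp (real J * ln 3)" by (simp add: exp_of_nat_mult)
    then show ?thesis by (simp add: power2_eq_square mult_exp_exp algebra_simps)
  qed
  finally show ?thesis by simp
qed

lemma entropy_lower_bound:
  obtains c \<epsilon>\<^sub>0 where "0 < c" "0 < \<epsilon>\<^sub>0"
    and "\<And>\<epsilon>. 0 < \<epsilon> \<Longrightarrow> \<epsilon> < \<epsilon>\<^sub>0 \<Longrightarrow>
           \<exists>S. L2_packing M \<epsilon> \<Theta> S \<and> exp (c * \<epsilon> powr (-2 / (2*k - 1))) \<le> real (card S)"
proof -
  define \<kappa> :: real where "\<kappa> = ln 2 - ln 8 / 8 - ln (9/8)"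
  define a where "a = cube_scale\<^sup>2 / 8"
  have r: "0 < 2*k - 1" using k_gt by simp
  have a: "0 < a" using cube_scale_pos by (simp add: a_def)
  have \<kappa>: "0 < \<kappa>" unfolding \<kappa>_def by (rule separation_exponent_pos)
  show ?thesis
  proof (rule that)
    show "0 < \<kappa> / 2 * a powr (1 / (2*k - 1))" using \<kappa> a by simp
    show "0 < sqrt a" using a by simp
    fix \<epsilon> assume \<epsilon>: "0 < \<epsilon>" "\<epsilon> < sqrt a"
    then have "\<epsilon>\<^sup>2 \<le> a" using a real_sqrt_le_iff[of "\<epsilon>\<^sup>2" a] by simp
    then obtain n where n: "n \<ge> 1" "\<epsilon>\<^sup>2 \<le> a * real n powr (-(2*k - 1))"
      and n_large: "a powr (1 / (2*k - 1)) * \<epsilon> powr (-2 / (2*k - 1)) \<le> 2 * real n"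
      using exists_nat_powr_neg_ge[OF r a \<epsilon>(1)] by blast
    have "8 * \<epsilon>\<^sup>2 \<le> cube_scale\<^sup>2 * real n powr (1 - 2*k)" using n(2) by (simp add: a_def)
    then obtain S where S: "L2_packing M \<epsilon> \<Theta> S" "exp (\<kappa> * real n) \<le> real (card S)"
      using exists_large_packing[OF n(1)] unfolding \<kappa>_def by blast
    have "\<kappa> / 2 * a powr (1 / (2*k - 1)) * \<epsilon> powr (-2 / (2*k - 1)) \<le> \<kappa> * real n"
      using mult_left_mono[OF n_large, of "\<kappa> / 2"] \<kappa> by simp
    then show "\<exists>S. L2_packing M \<epsilon> \<Theta> S
                 \<and> exp (\<kappa> / 2 * a powr (1 / (2*k - 1)) * \<epsilon> powr (-2 / (2*k - 1))) \<le> real (card S)"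
      using S by (meson exp_le_cancel_iff order_trans)
  qed
qed

lemma entropy_upper_bound:
  obtains c \<epsilon>\<^sub>0 where "0 < \<epsilon>\<^sub>0"
    and "\<And>\<epsilon> S. 0 < \<epsilon> \<Longrightarrow> \<epsilon> < \<epsilon>\<^sub>0 \<Longrightarrow> L2_packing M \<epsilon> \<Theta> S \<Longrightarrow>
           real (card S) \<le> exp (c * \<epsilon> powr (-2 / (2*k - 1)))"
proof -
  define K where "K = ln 3 + 2 * (ln (2 + A / (2 * sqrt C)) + k)"
  have r: "0 < 2*k - 1" using k_gt by simp
  have c: "0 < 8 * C" using C_pos by simp
  have K: "0 \<le> K" using A_pos C_pos k_gt by (simp add: K_def)
  show ?thesis
  proof (rule that)
    show "0 < sqrt (8 * C)" using c by simp
    fix \<epsilon> S assume \<epsilon>: "0 < \<epsilon>" "\<epsilon> < sqrt (8 * C)" and S: "L2_packing M \<epsilon> \<Theta> S"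
    then have "\<epsilon>\<^sup>2 \<le> 8 * C" using c real_sqrt_le_iff[of "\<epsilon>\<^sup>2" "8 * C"] by simp
    then obtain J where J: "J \<ge> 1" "8 * C * real J powr (-(2*k - 1)) \<le> \<epsilon>\<^sup>2"
      and J_small: "real J \<le> 2 * ((8 * C) powr (1 / (2*k - 1)) * \<epsilon> powr (-2 / (2*k - 1)))"
      using exists_nat_powr_neg_le[OF r c \<epsilon>(1)] by blast
    have "real (card S) \<le> exp (real J * K)"
      using card_packing_le[OF J(1) _ _ S] J(2) \<epsilon>(1) by (simp add: K_def)
    also have "\<dots> \<le> exp (2 * K * (8 * C) powr (1 / (2*k - 1)) * \<epsilon> powr (-2 / (2*k - 1)))"
      using mult_right_mono[OF J_small K] by (simp add: mult_ac)
    finally show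
      "real (card S) \<le> exp (2 * K * (8 * C) powr (1 / (2*k - 1)) * \<epsilon> powr (-2 / (2*k - 1)))" .
  qed
qed

end

theorem theorem1:
  fixes M :: "real measure" and \<phi> :: "nat \<Rightarrow> real \<Rightarrow> real" and A k C :: real
  assumes "measure_on_unit_interval M"
    and "orthonormal_basis_L2 M \<phi>"
    and "A > 0" and "k > 1/2" and "C > 0"
  shows "\<exists>c1 c2 \<epsilon>0. 0 < c1 \<and> c1 \<le> c2 \<and> 0 < \<epsilon>0 \<and>
           (\<forall>\<epsilon>. 0 < \<epsilon> \<and> \<epsilon> < \<epsilon>0 \<longrightarrow>
              packing_number M \<epsilon> (Theta M \<phi> k A C) \<noteq> \<infinity> \<and>
              c1 * \<epsilon> powr (-2 / (2*k - 1)) \<le> metric_entropy M \<epsilon> (Theta M \<phi> k A C) \<and>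
              metric_entropy M \<epsilon> (Theta M \<phi> k A C) \<le> c2 * \<epsilon> powr (-2 / (2*k - 1)))"
proof -
  interpret sparsity_class M \<phi> A k C
    using assms(2-5) by unfold_locales
  obtain c\<^sub>1 \<epsilon>\<^sub>1 where c\<^sub>1: "0 < c\<^sub>1" "0 < \<epsilon>\<^sub>1" and lower: "\<And>\<epsilon>. 0 < \<epsilon> \<Longrightarrow> \<epsilon> < \<epsilon>\<^sub>1 \<Longrightarrow>
      \<exists>S. L2_packing M \<epsilon> \<Theta> S \<and> exp (c\<^sub>1 * \<epsilon> powr (-2 / (2*k - 1))) \<le> real (card S)"
    using entropy_lower_bound by metis
  obtain c\<^sub>2 \<epsilon>\<^sub>2 where "0 < \<epsilon>\<^sub>2" and upper: "\<And>\<epsilon> S. 0 < \<epsilon> \<Longrightarrow> \<epsilon> < \<epsilon>\<^sub>2 \<Longrightarrow> L2_packing M \<epsilon> \<Theta> S \<Longrightarrow>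
      real (card S) \<le> exp (c\<^sub>2 * \<epsilon> powr (-2 / (2*k - 1)))"
    using entropy_upper_bound by metis
  have "packing_number M \<epsilon> \<Theta> \<noteq> \<infinity> \<and> c\<^sub>1 * \<epsilon> powr (-2 / (2*k - 1)) \<le> metric_entropy M \<epsilon> \<Theta> \<and>
        metric_entropy M \<epsilon> \<Theta> \<le> max c\<^sub>1 c\<^sub>2 * \<epsilon> powr (-2 / (2*k - 1))"
    if \<epsilon>: "0 < \<epsilon>" "\<epsilon> < \<epsilon>\<^sub>1" "\<epsilon> < \<epsilon>\<^sub>2" for \<epsilon>
  proof -
    obtain S where "L2_packing M \<epsilon> \<Theta> S" "exp (c\<^sub>1 * \<epsilon> powr (-2 / (2*k - 1))) \<le> real (card S)"
      using lower \<epsilon>(1,2) by blast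
    note entropy = metric_entropy_bounds[OF this upper[OF \<epsilon>(1,3)]]
    have "c\<^sub>2 * \<epsilon> powr (-2 / (2*k - 1)) \<le> max c\<^sub>1 c\<^sub>2 * \<epsilon> powr (-2 / (2*k - 1))"
      by (intro mult_right_mono) auto
    then show ?thesis using entropy order_trans[OF entropy(3)] by blast
  qed
  then show ?thesis
    using c\<^sub>1 \<open>0 < \<epsilon>\<^sub>2\<close> by (intro exI[of _ c\<^sub>1] exI[of _ "max c\<^sub>1 c\<^sub>2"] exI[of _ "min \<epsilon>\<^sub>1 \<epsilon>\<^sub>2"]) auto
qed

end
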